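(* Let $a<b$, $F:(a,b)\to\mathcal{K}(\mathbb{R}^n)$, $x_0\in(a,b)$, and suppose $F$ is strongly metrically differentiable at $x_0$, i.e. $F$ is metrically differentiable at $x_0$ and there are $L>0$ and a right neighborhood and a left neighborhood of $x_0$ such that $\sup_{y\in F(x_0)}\mathrm{haus}([x_0,x]^MF|_y,D^M_+F(x_0)|_y)\le L|x-x_0|$ for $x$ in the right neighborhood with $x>x_0$, and $\sup_{y\in F(x_0)}\mathrm{haus}([x_0,x]^MF|_y,D^M_-F(x_0)|_y)\le L|x-x_0|$ for $x$ in the left neighborhood with $x<x_0$. Then $\mathrm{haus}(F(x),L^MF(x))=O(|x-x_0|^2)$ as $x\to x_0$.
   Context: $\mathcal{K}(\mathbb{R}^n)$ is the set of nonempty compact subsets of $\mathbb{R}^n$, $|\cdot|$ the Euclidean norm, $\mathrm{dist}(x,A)=\min_{a\in A}|x-a|$, $\mathrm{haus}$ the Hausdorff distance. For $a\in\mathbb{R}^n$, $B\in\mathcal{K}(\mathbb{R}^n)$, $\Pi_B(a)=\{b\in B:|a-b|=\mathrm{dist}(a,B)\}$; for $A,B\in\mathcal{K}(\mathbb{R}^n)$, $\Pi(A,B)=\{(a,b)\in A\times B: a\in\Pi_A(b)\text{ or }b\in\Pi_B(a)\}$. For $x\ne x_0$, $y_0\in F(x_0)$: $[x_0,x]^MF|_{y_0}=\{\frac{y-y_0}{x-x_0}:(y_0,y)\in\Pi(F(x_0),F(x))\}$. $F$ is metrically differentiable from the right at $x_0$ if for every $y\in F(x_0)$ there is a nonempty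 set $D^M_+F(x_0)|_y$ with $\sup_{y\in F(x_0)}\mathrm{haus}(D^M_+F(x_0)|_y,[x_0,x]^MF|_y)\to0$ as $x\to x_0^+$; from the left analogously with $D^M_-F(x_0)|_y$ and $x\to x_0^-$; metrically differentiable means both. The local metric linear approximant is $L^MF(x)=\bigcup_{y\in F(x_0)}\big(\{y\}+(x-x_0)D^M_+F(x_0)|_y\big)$ for $x\ge x_0$ and $L^MF(x)=\bigcup_{y\in F(x_0)}\big(\{y\}+(x-x_0)D^M_-F(x_0)|_y\big)$ for $x<x_0$, where $\{c\}+\lambda A=\{c+\lambda a:a\in A\}$. *)

theory Defs
  imports "HOL-Analysis.Analysis" "HOL-Library.Landau_Symbols"
begin

text \<open>Hausdorff distance between nonempty bounded sets (only used on such sets).\<close>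
definition haus :: "'a::metric_space set \<Rightarrow> 'a set \<Rightarrow> real" where
  "haus A B = max (Sup ((\<lambda>a. infdist a B) ` A)) (Sup ((\<lambda>b. infdist b A) ` B))"

definition metric_proj :: "'a::metric_space set \<Rightarrow> 'a \<Rightarrow> 'a set" where
  "metric_proj B a = {b \<in> B. dist a b = infdist a B}"

definition metric_pairs :: "'a::metric_space set \<Rightarrow> 'a set \<Rightarrow> ('a \<times> 'a) set" where
  "metric_pairs A B = {(p, q). p \<in> A \<and> q \<in> B \<and> (p \<in> metric_proj A q \<or> q \<in> metric_proj B p)}"

definition metric_divdiff ::
  "(real \<Rightarrow> 'a::real_normed_vector set) \<Rightarrow> real \<Rightarrow> real \<Rightarrow> 'a \<Rightarrow> 'a set" where
  "metric_divdiff F x0 x y0 =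
     {(1 / (x - x0)) *\<^sub>R (y - y0) | y. (y0, y) \<in> metric_pairs (F x0) (F x)}"

text \<open>Uniform convergence sup_y haus(...) \<rightarrow> 0 is written out with epsilons; the
  Hausdorff distance being finite forces the (nonempty) derivative sets to be bounded.\<close>
definition metric_diff_right ::
  "(real \<Rightarrow> 'a::real_normed_vector set) \<Rightarrow> real \<Rightarrow> ('a \<Rightarrow> 'a set) \<Rightarrow> bool" where
  "metric_diff_right F x0 Dp \<longleftrightarrow>
     (\<forall>y\<in>F x0. Dp y \<noteq> {} \<and> bounded (Dp y)) \<and>
     (\<forall>\<epsilon>>0. eventually (\<lambda>x. \<forall>y\<in>F x0. haus (Dp y) (metric_divdiff F x0 x y) \<le> \<epsilon>) (at_right x0))"

definition metric_diff_left ::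
  "(real \<Rightarrow> 'a::real_normed_vector set) \<Rightarrow> real \<Rightarrow> ('a \<Rightarrow> 'a set) \<Rightarrow> bool" where
  "metric_diff_left F x0 Dm \<longleftrightarrow>
     (\<forall>y\<in>F x0. Dm y \<noteq> {} \<and> bounded (Dm y)) \<and>
     (\<forall>\<epsilon>>0. eventually (\<lambda>x. \<forall>y\<in>F x0. haus (Dm y) (metric_divdiff F x0 x y) \<le> \<epsilon>) (at_left x0))"

definition metric_lin_approx ::
  "(real \<Rightarrow> 'a::real_normed_vector set) \<Rightarrow> real \<Rightarrow> ('a \<Rightarrow> 'a set) \<Rightarrow> ('a \<Rightarrow> 'a set) \<Rightarrow> real \<Rightarrow> 'a set" where
  "metric_lin_approx F x0 Dp Dm x =
     (if x \<ge> x0 then (\<Union>y\<in>F x0. (\<lambda>d. y + (x - x0) *\<^sub>R d) ` Dp y)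
      else (\<Union>y\<in>F x0. (\<lambda>d. y + (x - x0) *\<^sub>R d) ` Dm y))"

end

(*
  On each side of x0 the set F x is recovered from F x0 and the divided differences:
  F x is the union over y in F x0 of the sets y + (x - x0) [x0,x]^M F|_y, because every
  point of F x has a nearest point in F x0.  The local approximant is the same union with
  D^M_{+/-} F(x0)|_y in place of [x0,x]^M F|_y.  The Hausdorff distance of two unions is
  at most the supremum of the distances of corresponding members, and the affine map
  v \<mapsto> y + (x - x0) v scales Hausdorff distances by |x - x0|.  Hence the strong metric
  differentiability bound L |x - x0| turns into the bound L |x - x0|^2.
*)
theory Submission
  imports Defs
begin

lemma haus_commute: "haus A B = haus B A"
  by (simp add: haus_def max.commute)

lemma haus_leI:
  assumes "A \<noteq> {}" "B \<noteq> {}"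
    and "\<And>a. a \<in> A \<Longrightarrow> infdist a B \<le> c" "\<And>b. b \<in> B \<Longrightarrow> infdist b A \<le> c"
  shows "haus A B \<le> c"
  using assms by (simp add: haus_def cSUP_least)

lemma bdd_above_infdist_image:
  assumes "bounded A"
  shows "bdd_above ((\<lambda>a. infdist a B) ` A)"
proof (cases "B = {}")
  case True
  then show ?thesis by (auto simp: infdist_def bdd_above_def)
next
  case False
  then obtain b where b: "b \<in> B" by blast
  from assms obtain x e where e: "\<And>a. a \<in> A \<Longrightarrow> dist x a \<le> e"
    unfolding bounded_def by blast
  have "infdist a B \<le> e + dist x b" if "a \<in> A" for a
  proof -
    have "infdist a B \<le> dist a b" using b by (rule infdist_le)
    also have "\<dots> \<le> dist a x + dist x b" by (rule dist_triangle)
    also have "\<dots> \<le> e + dist x b" using e[OF that] by (simp add: dist_commute)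
    finally show ?thesis .
  qed
  then show ?thesis by (auto simp: bdd_above_def)
qed

lemma infdist_le_haus:
  assumes "bounded A" "a \<in> A"
  shows "infdist a B \<le> haus A B"
  using cSUP_upper[OF assms(2) bdd_above_infdist_image[OF assms(1), of B]]
  unfolding haus_def by linarith

lemma haus_nonneg:
  assumes "bounded A" "A \<noteq> {}"
  shows "0 \<le> haus A B"
proof -
  obtain a where "a \<in> A" using assms(2) by blast
  then have "infdist a B \<le> haus A B" by (rule infdist_le_haus[OF assms(1)])
  then show ?thesis using infdist_nonneg by (rule order_trans[rotated])
qed

lemma infdist_image_le:
  assumes f: "k-lipschitz_on U f" and "a \<in> U" "B \<subseteq> U"
  shows "infdist (f a) (f ` B) \<le> k * infdist a B"
proof (cases "B = {}")
  case True
  then show ?thesis by (simp add: infdist_def)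
next
  case False
  have pointwise: "infdist (f a) (f ` B) \<le> k * dist a b" if "b \<in> B" for b
    using infdist_le[of "f b" "f ` B" "f a"] lipschitz_onD[OF f \<open>a \<in> U\<close>, of b] that assms(3)
    by fastforce
  consider "k = 0" | "k > 0" using lipschitz_on_nonneg[OF f] by linarith
  then show ?thesis
  proof cases
    case 1
    with False pointwise show ?thesis by (metis ex_in_conv mult_zero_left)
  next
    case 2
    have "infdist (f a) (f ` B) / k \<le> infdist a B"
      unfolding infdist_notempty[OF False]
    proof (rule cINF_greatest)
      fix b assume "b \<in> B"
      then show "infdist (f a) (f ` B) / k \<le> dist a b"
        using pointwise[of b] 2 by (simp add: divide_le_eq mult.commute)
    qed (rule False)
    with 2 show ?thesis by (simp add: divide_le_eq mult.commute)
  qed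
qed

lemma haus_image_le:
  assumes f: "k-lipschitz_on U f" and "A \<subseteq> U" "B \<subseteq> U"
    and A: "bounded A" "A \<noteq> {}" and B: "bounded B" "B \<noteq> {}"
  shows "haus (f ` A) (f ` B) \<le> k * haus A B"
proof (rule haus_leI)
  have k: "0 \<le> k" using f by (rule lipschitz_on_nonneg)
  show "infdist a' (f ` B) \<le> k * haus A B" if "a' \<in> f ` A" for a'
  proof -
    from that obtain a where a: "a \<in> A" "a' = f a" by blast
    have "infdist (f a) (f ` B) \<le> k * infdist a B"
      using a(1) assms(2,3) by (intro infdist_image_le[OF f]) auto
    also have "\<dots> \<le> k * haus A B" using infdist_le_haus[OF A(1) a(1)] k by (rule mult_left_mono)
    finally show ?thesis using a(2) by simp
  qed
  show "infdist b' (f ` A) \<le> k * haus A B" if "b' \<in> f ` B" for b'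
  proof -
    from that obtain b where b: "b \<in> B" "b' = f b" by blast
    have "infdist (f b) (f ` A) \<le> k * infdist b A"
      using b(1) assms(2,3) by (intro infdist_image_le[OF f]) auto
    also have "\<dots> \<le> k * haus A B"
      using infdist_le_haus[OF B(1) b(1), of A] k by (simp add: haus_commute mult_left_mono)
    finally show ?thesis using b(2) by simp
  qed
  show "f ` A \<noteq> {}" "f ` B \<noteq> {}" using A(2) B(2) by simp_all
qed

lemma haus_UN_le:
  assumes "I \<noteq> {}"
    and A: "\<And>i. i \<in> I \<Longrightarrow> bounded (A i) \<and> A i \<noteq> {}"
    and B: "\<And>i. i \<in> I \<Longrightarrow> bounded (B i) \<and> B i \<noteq> {}"
    and c: "\<And>i. i \<in> I \<Longrightarrow> haus (A i) (B i) \<le> c"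
  shows "haus (\<Union>i\<in>I. A i) (\<Union>i\<in>I. B i) \<le> c"
proof (rule haus_leI)
  show "infdist a (\<Union>i\<in>I. B i) \<le> c" if "a \<in> (\<Union>i\<in>I. A i)" for a
  proof -
    from that obtain i where i: "i \<in> I" "a \<in> A i" by blast
    have "infdist a (\<Union>i\<in>I. B i) \<le> infdist a (B i)"
      using i(1) B[OF i(1)] by (intro infdist_mono) auto
    also have "\<dots> \<le> haus (A i) (B i)" using i(2) A[OF i(1)] by (intro infdist_le_haus) simp_all
    finally show ?thesis using c[OF i(1)] by linarith
  qed
  show "infdist b (\<Union>i\<in>I. A i) \<le> c" if "b \<in> (\<Union>i\<in>I. B i)" for b
  proof -
    from that obtain i where i: "i \<in> I" "b \<in> B i" by blast
    have "infdist b (\<Union>i\<in>I. A i) \<le> infdist b (A i)"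
      using i(1) A[OF i(1)] by (intro infdist_mono) auto
    also have "\<dots> \<le> haus (A i) (B i)"
      using i(2) B[OF i(1)] by (subst haus_commute) (intro infdist_le_haus, simp_all)
    finally show ?thesis using c[OF i(1)] by linarith
  qed
  obtain i where "i \<in> I" using \<open>I \<noteq> {}\<close> by blast
  then show "(\<Union>i\<in>I. A i) \<noteq> {}" "(\<Union>i\<in>I. B i) \<noteq> {}" using A B by blast+
qed

lemma lipschitz_on_affine:
  fixes y :: "'a::real_normed_vector"
  shows "\<bar>h\<bar>-lipschitz_on U (\<lambda>v. y + h *\<^sub>R v)"
  by (rule lipschitz_onI) (simp_all add: dist_norm flip: scaleR_diff_right)

lemma bounded_affine_image:
  fixes y :: "'a::real_normed_vector"
  assumes "bounded S"
  shows "bounded ((\<lambda>v. y + h *\<^sub>R v) ` S)"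
  using bounded_translation[OF bounded_scaling[OF assms]] by (simp add: image_image)

lemma UN_metric_divdiff_eq:
  fixes F :: "real \<Rightarrow> 'a::{real_normed_vector, heine_borel} set"
  assumes "x \<noteq> x0" "closed (F x0)" "F x0 \<noteq> {}"
  shows "F x = (\<Union>y\<in>F x0. (\<lambda>v. y + (x - x0) *\<^sub>R v) ` metric_divdiff F x0 x y)"
proof (intro equalityI subsetI)
  fix z assume z: "z \<in> F x"
  obtain y where y: "y \<in> F x0" "infdist z (F x0) = dist z y"
    using infdist_attains_inf[OF assms(2,3)] by metis
  then have "(y, z) \<in> metric_pairs (F x0) (F x)"
    using z by (auto simp: metric_pairs_def metric_proj_def dist_commute)
  then have "(1 / (x - x0)) *\<^sub>R (z - y) \<in> metric_divdiff F x0 x y"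
    unfolding metric_divdiff_def by blast
  moreover have "z = y + (x - x0) *\<^sub>R ((1 / (x - x0)) *\<^sub>R (z - y))"
    using assms(1) by simp
  ultimately have "z \<in> (\<lambda>v. y + (x - x0) *\<^sub>R v) ` metric_divdiff F x0 x y"
    by (rule image_eqI[rotated])
  with y(1) show "z \<in> (\<Union>y\<in>F x0. (\<lambda>v. y + (x - x0) *\<^sub>R v) ` metric_divdiff F x0 x y)"
    by (rule UN_I)
next
  fix w assume "w \<in> (\<Union>y\<in>F x0. (\<lambda>v. y + (x - x0) *\<^sub>R v) ` metric_divdiff F x0 x y)"
  then obtain y z where "(y, z) \<in> metric_pairs (F x0) (F x)"
    and w: "w = y + (x - x0) *\<^sub>R ((1 / (x - x0)) *\<^sub>R (z - y))"
    unfolding metric_divdiff_def by blast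
  then have "z \<in> F x" by (simp add: metric_pairs_def)
  moreover have "w = z" using w assms(1) by simp
  ultimately show "w \<in> F x" by simp
qed

lemma metric_divdiff_nonempty:
  fixes F :: "real \<Rightarrow> 'a::{real_normed_vector, heine_borel} set"
  assumes "closed (F x)" "F x \<noteq> {}" "y \<in> F x0"
  shows "metric_divdiff F x0 x y \<noteq> {}"
proof -
  obtain z where "z \<in> F x" "infdist y (F x) = dist y z"
    using infdist_attains_inf[OF assms(1,2)] by metis
  then have "(y, z) \<in> metric_pairs (F x0) (F x)"
    using assms(3) by (auto simp: metric_pairs_def metric_proj_def)
  then show ?thesis by (auto simp: metric_divdiff_def)
qed

lemma bounded_metric_divdiff:
  assumes "bounded (F x)"
  shows "bounded (metric_divdiff F x0 x y)"
proof -
  have "metric_divdiff F x0 x y \<subseteq> (\<lambda>z. (1 / (x - x0)) *\<^sub>R z) ` (\<lambda>z. - y + z) ` F x"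
    by (auto simp: metric_divdiff_def metric_pairs_def)
  then show ?thesis
    using bounded_subset bounded_scaling[OF bounded_translation[OF assms]] by blast
qed

lemma haus_UN_affine_image_le:
  fixes F :: "real \<Rightarrow> 'a::{real_normed_vector, heine_borel} set"
  assumes "x \<noteq> x0" and F0: "compact (F x0)" "F x0 \<noteq> {}" and Fx: "compact (F x)" "F x \<noteq> {}"
    and D: "\<forall>y\<in>F x0. D y \<noteq> {} \<and> bounded (D y)"
    and c: "\<forall>y\<in>F x0. haus (metric_divdiff F x0 x y) (D y) \<le> c"
  shows "haus (F x) (\<Union>y\<in>F x0. (\<lambda>d. y + (x - x0) *\<^sub>R d) ` D y) \<le> \<bar>x - x0\<bar> * c"
proof -
  let ?f = "\<lambda>y v. y + (x - x0) *\<^sub>R v"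
  have divdiff: "bounded (metric_divdiff F x0 x y) \<and> metric_divdiff F x0 x y \<noteq> {}"
    if "y \<in> F x0" for y
    using that Fx by (simp add: bounded_metric_divdiff compact_imp_bounded compact_imp_closed
        metric_divdiff_nonempty)
  have "haus (?f y ` metric_divdiff F x0 x y) (?f y ` D y) \<le> \<bar>x - x0\<bar> * c" if "y \<in> F x0" for y
  proof -
    have "haus (?f y ` metric_divdiff F x0 x y) (?f y ` D y)
        \<le> \<bar>x - x0\<bar> * haus (metric_divdiff F x0 x y) (D y)"
      using divdiff[OF that] D that by (intro haus_image_le[OF lipschitz_on_affine[where U = UNIV]]) auto
    also have "\<dots> \<le> \<bar>x - x0\<bar> * c" using c that by (simp add: mult_left_mono)
    finally show ?thesis .
  qed
  then have "haus (\<Union>y\<in>F x0. ?f y ` metric_divdiff F x0 x y) (\<Union>y\<in>F x0. ?f y ` D y)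
      \<le> \<bar>x - x0\<bar> * c"
    using F0(2) divdiff D by (intro haus_UN_le) (auto simp: bounded_affine_image)
  then show ?thesis
    using UN_metric_divdiff_eq[where F = F, OF assms(1) compact_imp_closed[OF F0(1)] F0(2)] by simp
qed

lemma haus_metric_lin_approx_le:
  fixes F :: "real \<Rightarrow> 'a::{real_normed_vector, heine_borel} set"
  assumes "x \<noteq> x0" and F0: "compact (F x0)" "F x0 \<noteq> {}" and Fx: "compact (F x)" "F x \<noteq> {}"
    and Dp: "\<forall>y\<in>F x0. Dp y \<noteq> {} \<and> bounded (Dp y)"
    and Dm: "\<forall>y\<in>F x0. Dm y \<noteq> {} \<and> bounded (Dm y)"
    and right: "x0 < x \<Longrightarrow> \<forall>y\<in>F x0. haus (metric_divdiff F x0 x y) (Dp y) \<le> c"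
    and left: "x < x0 \<Longrightarrow> \<forall>y\<in>F x0. haus (metric_divdiff F x0 x y) (Dm y) \<le> c"
  shows "haus (F x) (metric_lin_approx F x0 Dp Dm x) \<le> \<bar>x - x0\<bar> * c"
proof (cases "x0 < x")
  case True
  then show ?thesis
    using haus_UN_affine_image_le[OF assms(1) F0 Fx Dp right] by (simp add: metric_lin_approx_def)
next
  case False
  with assms(1) have "x < x0" by simp
  then show ?thesis
    using haus_UN_affine_image_le[OF assms(1) F0 Fx Dm left] by (simp add: metric_lin_approx_def)
qed

theorem mainTheorem4:
  fixes F :: "real \<Rightarrow> (real ^ 'n) set"
    and a b x0 :: real
    and Dp Dm :: "real ^ 'n \<Rightarrow> (real ^ 'n) set"
  assumes "a < b"
    and "\<forall>x\<in>{a<..<b}. compact (F x) \<and> F x \<noteq> {}"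
    and "x0 \<in> {a<..<b}"
    and "metric_diff_right F x0 Dp"
    and "metric_diff_left F x0 Dm"
    and "\<exists>L>0. \<exists>\<delta>>0.
           (\<forall>x. x0 < x \<and> x < x0 + \<delta> \<longrightarrow>
              (\<forall>y\<in>F x0. haus (metric_divdiff F x0 x y) (Dp y) \<le> L * \<bar>x - x0\<bar>)) \<and>
           (\<forall>x. x0 - \<delta> < x \<and> x < x0 \<longrightarrow>
              (\<forall>y\<in>F x0. haus (metric_divdiff F x0 x y) (Dm y) \<le> L * \<bar>x - x0\<bar>))"
  shows "(\<lambda>x. haus (F x) (metric_lin_approx F x0 Dp Dm x)) \<in> O[at x0](\<lambda>x. \<bar>x - x0\<bar> ^ 2)"
proof -
  obtain L \<delta> where "\<delta> > 0"
    and right: "\<And>x. x0 < x \<Longrightarrow> x < x0 + \<delta> \<Longrightarrow>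
              \<forall>y\<in>F x0. haus (metric_divdiff F x0 x y) (Dp y) \<le> L * \<bar>x - x0\<bar>"
    and left: "\<And>x. x0 - \<delta> < x \<Longrightarrow> x < x0 \<Longrightarrow>
              \<forall>y\<in>F x0. haus (metric_divdiff F x0 x y) (Dm y) \<le> L * \<bar>x - x0\<bar>"
    using assms(6) by blast
  have F0: "compact (F x0)" "F x0 \<noteq> {}" using assms(2,3) by auto
  have Dp: "\<forall>y\<in>F x0. Dp y \<noteq> {} \<and> bounded (Dp y)" and Dm: "\<forall>y\<in>F x0. Dm y \<noteq> {} \<and> bounded (Dm y)"
    using assms(4,5) by (simp_all add: metric_diff_right_def metric_diff_left_def)
  define r where "r = min \<delta> (min (x0 - a) (b - x0))"
  have "r > 0" using \<open>\<delta> > 0\<close> assms(3) by (simp add: r_def)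
  have "norm (haus (F x) (metric_lin_approx F x0 Dp Dm x)) \<le> L * norm (\<bar>x - x0\<bar> ^ 2)"
    if x: "x \<noteq> x0" "dist x x0 < r" for x
  proof -
    have "x \<in> {a<..<b}" using x(2) by (auto simp: r_def dist_real_def)
    then have Fx: "compact (F x)" "F x \<noteq> {}" using assms(2) by auto
    have "haus (F x) (metric_lin_approx F x0 Dp Dm x) \<le> \<bar>x - x0\<bar> * (L * \<bar>x - x0\<bar>)"
      using x right[of x] left[of x]
      by (intro haus_metric_lin_approx_le[OF x(1) F0 Fx Dp Dm]) (auto simp: r_def dist_real_def)
    moreover have "0 \<le> haus (F x) (metric_lin_approx F x0 Dp Dm x)"
      using Fx by (simp add: haus_nonneg compact_imp_bounded)
    ultimately show ?thesis by (simp add: power2_eq_square mult.commute mult.left_commute)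
  qed
  then have "eventually (\<lambda>x. norm (haus (F x) (metric_lin_approx F x0 Dp Dm x))
      \<le> L * norm (\<bar>x - x0\<bar> ^ 2)) (at x0)"
    unfolding eventually_at using \<open>r > 0\<close> by blast
  then show ?thesis by (rule bigoI)
qed

end
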